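(* Let $H\in(0,1)\setminus\{\tfrac12\}$ and let $X$ be a centered Gaussian process with covariance \[ \mathbb{E}[X_sX_t]=s^{2H}+t^{2H}-\tfrac12\big((s+t)^{2H}+|s-t|^{2H}\big),\qquad s,t\geq0 \] (sub-fractional Brownian motion). Then $X$ is not a Markov process. *)

theory Defs
  imports "HOL-Probability.Probability"
begin

definition nat_filtration :: "'a measure \<Rightarrow> (real \<Rightarrow> 'a \<Rightarrow> real) \<Rightarrow> real \<Rightarrow> 'a measure" where
  "nat_filtration M X s =
     sigma (space M) {X u -` A \<inter> space M | u A. 0 \<le> u \<and> u \<le> s \<and> A \<in> sets (borel :: real measure)}"

definition gen_sigma_at :: "'a measure \<Rightarrow> (real \<Rightarrow> 'a \<Rightarrow> real) \<Rightarrow> real \<Rightarrow> 'a measure" where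
  "gen_sigma_at M X s =
     sigma (space M) {X s -` A \<inter> space M | A. A \<in> sets (borel :: real measure)}"

definition markov_process :: "'a measure \<Rightarrow> (real \<Rightarrow> 'a \<Rightarrow> real) \<Rightarrow> bool" where
  "markov_process M X \<longleftrightarrow>
     (\<forall>s t A. 0 \<le> s \<longrightarrow> s \<le> t \<longrightarrow> A \<in> sets (borel :: real measure) \<longrightarrow>
        (AE \<omega> in M.
          real_cond_exp M (nat_filtration M X s) (indicator (X t -` A \<inter> space M)) \<omega> =
          real_cond_exp M (gen_sigma_at M X s) (indicator (X t -` A \<inter> space M)) \<omega>))"

definition gaussian_process :: "'a measure \<Rightarrow> (real \<Rightarrow> 'a \<Rightarrow> real) \<Rightarrow> bool" where
  "gaussian_process M X \<longleftrightarrow>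
     (\<forall>t\<ge>0. X t \<in> borel_measurable M) \<and>
     (\<forall>T (c :: real \<Rightarrow> real). finite T \<longrightarrow> T \<subseteq> {0..} \<longrightarrow>
        (\<exists>\<mu> \<sigma>. \<sigma> > 0 \<and>
            distributed M lborel (\<lambda>\<omega>. \<Sum>t\<in>T. c t * X t \<omega>) (normal_density \<mu> \<sigma>)) \<or>
        (\<exists>k. AE \<omega> in M. (\<Sum>t\<in>T. c t * X t \<omega>) = k))"

end

theory Submission
  imports Defs "HOL-Real_Asymp.Real_Asymp"
begin

(*
  A centered Gaussian Markov process has a covariance R that factorises along the time axis:
  R(r,t) R(s,s) = R(r,s) R(s,t) for r < s < t. For the sub-fractional covariance R take r = 1,
  s = v and t = v^2; by self-similarity the identity reads R(1,1) R(1,v^2) = R(1,v)^2. A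
  second-difference estimate gives R(1,v) -> 1 as v -> infinity, so R(1,1) = 2 - 2^(2H-1)
  must equal 1, i.e. H = 1/2.
*)

section \<open>Differentiation under the integral sign\<close>

lemma abs_sin_diff_le: "\<bar>sin (x::real) - sin y\<bar> \<le> \<bar>x - y\<bar>"
proof -
  have "\<bar>sin x - sin y\<bar> = 2 * \<bar>sin ((x - y) / 2)\<bar> * \<bar>cos ((x + y) / 2)\<bar>"
    by (simp add: sin_diff_sin abs_mult)
  also have "\<dots> \<le> 2 * \<bar>(x - y) / 2\<bar> * 1"
    by (intro mult_mono abs_sin_x_le_abs_x) auto
  finally show ?thesis by simp
qed

lemma abs_cos_diff_le: "\<bar>cos (x::real) - cos y\<bar> \<le> \<bar>x - y\<bar>"
proof -
  have "\<bar>cos x - cos y\<bar> = 2 * \<bar>sin ((x + y) / 2)\<bar> * \<bar>sin ((y - x) / 2)\<bar>"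
    by (simp add: cos_diff_cos abs_mult)
  also have "\<dots> \<le> 2 * 1 * \<bar>(y - x) / 2\<bar>"
    by (intro mult_mono abs_sin_x_le_abs_x) auto
  finally show ?thesis by simp
qed

lemma integral_has_real_derivative_at_0_eq:
  fixes f :: "real \<Rightarrow> 'a \<Rightarrow> real"
  assumes F: "((\<lambda>m. integral\<^sup>L M (f m)) has_real_derivative D) (at 0)"
    and f': "\<And>\<omega>. ((\<lambda>m. f m \<omega>) has_real_derivative f' \<omega>) (at 0)"
    and lipschitz: "\<And>m \<omega>. \<bar>f m \<omega> - f 0 \<omega>\<bar> \<le> \<bar>m\<bar> * g \<omega>"
    and [measurable]: "\<And>m. f m \<in> borel_measurable M" "f' \<in> borel_measurable M"
    and integrable: "\<And>m. integrable M (f m)" "integrable M g"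
  shows "integral\<^sup>L M f' = D"
proof -
  define e :: "nat \<Rightarrow> real" where "e n = inverse (real (Suc n))" for n
  have e_pos: "e n > 0" for n by (simp add: e_def)
  have "filterlim e (at 0) sequentially"
    by (rule filterlim_atI) (use LIMSEQ_inverse_real_of_nat in \<open>auto simp: e_def[abs_def]\<close>)
  then have quotient_lim: "(\<lambda>n. (h (e n) - h 0) / e n) \<longlonglongrightarrow> d"
    if "(h has_real_derivative d) (at 0)" for h d
    using filterlim_compose[OF that[unfolded has_field_derivative_iff]] by simp
  define q where "q n \<omega> = (f (e n) \<omega> - f 0 \<omega>) / e n" for n \<omega>
  have "(\<lambda>n. integral\<^sup>L M (q n)) \<longlonglongrightarrow> integral\<^sup>L M f'"
  proof (rule integral_dominated_convergence[where w = g])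
    show "AE \<omega> in M. (\<lambda>n. q n \<omega>) \<longlonglongrightarrow> f' \<omega>"
      unfolding q_def using quotient_lim[OF f'] by simp
    show "AE \<omega> in M. norm (q n \<omega>) \<le> g \<omega>" for n
      using lipschitz[of "e n"] e_pos[of n] by (simp add: q_def divide_le_eq mult.commute)
  qed (auto simp: q_def[abs_def] integrable)
  moreover have "integral\<^sup>L M (q n) = (integral\<^sup>L M (f (e n)) - integral\<^sup>L M (f 0)) / e n" for n
    unfolding q_def by (simp add: integrable)
  ultimately show ?thesis
    using LIMSEQ_unique quotient_lim[OF F] by fastforce
qed

section \<open>Gaussian random variables\<close>

definition gaussian_rv :: "'a measure \<Rightarrow> ('a \<Rightarrow> real) \<Rightarrow> bool" where
  "gaussian_rv M Z \<longleftrightarrow>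
     (\<exists>\<mu> \<sigma>. \<sigma> > 0 \<and> distributed M lborel Z (normal_density \<mu> \<sigma>)) \<or> (\<exists>k. AE \<omega> in M. Z \<omega> = k)"

lemma (in prob_space) gaussian_rv_integrable:
  assumes Z: "Z \<in> borel_measurable M" "gaussian_rv M Z"
  shows "integrable M Z" "integrable M (\<lambda>\<omega>. (Z \<omega>)^2)"
proof -
  have "integrable M Z \<and> integrable M (\<lambda>\<omega>. (Z \<omega>)^2)"
  proof (cases "\<exists>k. AE \<omega> in M. Z \<omega> = k")
    case True
    then obtain k where k: "AE \<omega> in M. Z \<omega> = k" by auto
    then have "AE \<omega> in M. (Z \<omega>)^2 = k^2" by eventually_elim simp
    then show ?thesis
      using k Z integrable_cong_AE[of Z M "\<lambda>_. k"] integrable_cong_AE[of "\<lambda>\<omega>. (Z \<omega>)^2" M "\<lambda>_. k^2"]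
      by simp
  next
    case False
    then obtain \<mu> \<sigma> where \<sigma>: "\<sigma> > 0" and D: "distributed M lborel Z (normal_density \<mu> \<sigma>)"
      using Z unfolding gaussian_rv_def by auto
    have moment: "integrable M (\<lambda>x. (Z x - \<mu>)^k)" for k
      using distributed_integrable[OF D, of "\<lambda>x. (x - \<mu>)^k"] integrable_normal_moment[OF \<sigma>, of \<mu> k]
      by simp
    have "integrable M (\<lambda>x. (Z x - \<mu>) + \<mu>)"
      by (rule Bochner_Integration.integrable_add) (use moment[of 1] in simp_all)
    moreover have "integrable M (\<lambda>x. (Z x - \<mu>)^2 + 2 * \<mu> * (Z x - \<mu>)^1 + \<mu>^2)"
      using moment[of 1] moment[of 2] by simp
    moreover have "(Z x - \<mu>)^2 + 2 * \<mu> * (Z x - \<mu>)^1 + \<mu>^2 = (Z x)^2" for x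
      by (simp add: power2_eq_square algebra_simps)
    ultimately show ?thesis by simp
  qed
  then show "integrable M Z" "integrable M (\<lambda>\<omega>. (Z \<omega>)^2)" by auto
qed

lemma (in prob_space) centered_gaussian_rv_trig_expectation:
  assumes Z: "Z \<in> borel_measurable M" "gaussian_rv M Z" and centered: "expectation Z = 0"
  shows "expectation (\<lambda>\<omega>. cos (Z \<omega>)) = exp (- expectation (\<lambda>\<omega>. (Z \<omega>)^2) / 2)"
    and "expectation (\<lambda>\<omega>. sin (Z \<omega>)) = 0"
proof -
  have "expectation (\<lambda>\<omega>. cos (Z \<omega>)) = exp (- expectation (\<lambda>\<omega>. (Z \<omega>)^2) / 2) \<and>
        expectation (\<lambda>\<omega>. sin (Z \<omega>)) = 0"
  proof (cases "\<exists>k. AE \<omega> in M. Z \<omega> = k")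
    case True
    then obtain k where k: "AE \<omega> in M. Z \<omega> = k" by auto
    have "k = expectation Z"
      using integral_cong_AE[of Z M "\<lambda>_. k"] k Z prob_space by simp
    then have Z0: "AE \<omega> in M. Z \<omega> = 0" using k centered by simp
    have "expectation (\<lambda>\<omega>. cos (Z \<omega>)) = expectation (\<lambda>_. 1)"
      by (rule integral_cong_AE) (use Z Z0 in auto)
    moreover have "expectation (\<lambda>\<omega>. sin (Z \<omega>)) = expectation (\<lambda>_. 0)"
      by (rule integral_cong_AE) (use Z Z0 in auto)
    moreover have "expectation (\<lambda>\<omega>. (Z \<omega>)^2) = expectation (\<lambda>_. 0)"
      by (rule integral_cong_AE) (use Z Z0 in auto)
    ultimately show ?thesis using prob_space by simp
  next
    case False
    then obtain \<mu> \<sigma> where \<sigma>: "\<sigma> > 0" and D: "distributed M lborel Z (normal_density \<mu> \<sigma>)"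
      using Z unfolding gaussian_rv_def by auto
    have "\<mu> = 0" using normal_distributed_expectation[OF \<sigma> D] centered by simp
    have variance: "expectation (\<lambda>\<omega>. (Z \<omega>)^2) = \<sigma>^2"
      using normal_distributed_variance[OF \<sigma> D] centered by simp
    define W where "W x = Z x / \<sigma>" for x
    have "distributed M lborel W std_normal_density"
      using normal_standard_normal_convert[OF \<sigma>] D \<open>\<mu> = 0\<close> unfolding W_def by simp
    then have W: "W \<in> measurable M lborel" "distr M lborel W = std_normal_distribution"
      by (auto dest: distributed_measurable distributed_distr_eq_density)
    have "(CLINT x|M. iexp (Z x)) = (CLINT x|M. iexp (\<sigma> * W x))"
      using \<sigma> by (simp add: W_def)
    also have "\<dots> = (CLINT x|distr M lborel W. iexp (\<sigma> * x))"
      by (rule integral_distr[OF W(1), symmetric]) measurable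
    also have "\<dots> = exp (- (\<sigma>^2) / 2)"
      unfolding W(2) char_def[symmetric] by (simp add: char_std_normal_distribution)
    finally have char: "(CLINT x|M. iexp (Z x)) = complex_of_real (exp (- (\<sigma>^2) / 2))" .
    have "complex_integrable M (\<lambda>x. iexp (Z x))"
      by (rule integrable_const_bound[where B=1]) (use Z in \<open>auto simp: norm_exp_i_times\<close>)
    from integral_Re[OF this] integral_Im[OF this] show ?thesis
      by (simp add: Re_exp Im_exp char variance)
  qed
  then show "expectation (\<lambda>\<omega>. cos (Z \<omega>)) = exp (- expectation (\<lambda>\<omega>. (Z \<omega>)^2) / 2)"
    and "expectation (\<lambda>\<omega>. sin (Z \<omega>)) = 0" by auto
qed

lemma integrable_mult_if_square_integrable:
  fixes f g :: "'a \<Rightarrow> real"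
  assumes [measurable]: "f \<in> borel_measurable M" "g \<in> borel_measurable M"
    and "integrable M (\<lambda>x. (f x)^2)" "integrable M (\<lambda>x. (g x)^2)"
  shows "integrable M (\<lambda>x. f x * g x)"
proof (rule Bochner_Integration.integrable_bound)
  show "integrable M (\<lambda>x. (f x)^2 + (g x)^2)"
    using assms by simp
  have "\<bar>a * b\<bar> \<le> a^2 + b^2" for a b :: real
  proof -
    have "2 * \<bar>a\<bar> * \<bar>b\<bar> \<le> a^2 + b^2"
      using sum_squares_bound[of "\<bar>a\<bar>" "\<bar>b\<bar>"] by simp
    moreover have "0 \<le> \<bar>a\<bar> * \<bar>b\<bar>" by simp
    ultimately have "\<bar>a\<bar> * \<bar>b\<bar> \<le> a^2 + b^2" by linarith
    then show ?thesis by (simp add: abs_mult)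
  qed
  then show "AE x in M. norm (f x * g x) \<le> norm ((f x)^2 + (g x)^2)"
    by simp
qed measurable

definition centered_gaussian_pair :: "'a measure \<Rightarrow> ('a \<Rightarrow> real) \<Rightarrow> ('a \<Rightarrow> real) \<Rightarrow> bool" where
  "centered_gaussian_pair M U Y \<longleftrightarrow>
     U \<in> borel_measurable M \<and> Y \<in> borel_measurable M \<and>
     integral\<^sup>L M U = 0 \<and> integral\<^sup>L M Y = 0 \<and>
     (\<forall>m l. gaussian_rv M (\<lambda>\<omega>. m * U \<omega> + l * Y \<omega>))"

lemma (in prob_space) centered_gaussian_pair_integrable:
  assumes "centered_gaussian_pair M U Y"
  shows "integrable M U" "integrable M (\<lambda>\<omega>. (U \<omega>)^2)"
    and "integrable M Y" "integrable M (\<lambda>\<omega>. (Y \<omega>)^2)"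
proof -
  have "U \<in> borel_measurable M" "Y \<in> borel_measurable M"
    and "gaussian_rv M (\<lambda>\<omega>. 1 * U \<omega> + 0 * Y \<omega>)" "gaussian_rv M (\<lambda>\<omega>. 0 * U \<omega> + 1 * Y \<omega>)"
    using assms unfolding centered_gaussian_pair_def by blast+
  then show "integrable M U" "integrable M (\<lambda>\<omega>. (U \<omega>)^2)"
    and "integrable M Y" "integrable M (\<lambda>\<omega>. (Y \<omega>)^2)"
    by (simp_all add: gaussian_rv_integrable)
qed

text \<open>
  Differentiating \<open>E cos (m U + l Y) = exp (- E (m U + l Y)\<^sup>2 / 2)\<close> and
  \<open>E sin (m U + l Y) = 0\<close> in \<open>m\<close> at \<open>m = 0\<close>.
\<close>
lemma (in prob_space) centered_gaussian_pair_trig_moments: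
  assumes "centered_gaussian_pair M U Y"
  shows "expectation (\<lambda>\<omega>. U \<omega> * sin (l * Y \<omega>)) =
      l * expectation (\<lambda>\<omega>. U \<omega> * Y \<omega>) * exp (- (l^2 * expectation (\<lambda>\<omega>. (Y \<omega>)^2)) / 2)"
    and "expectation (\<lambda>\<omega>. U \<omega> * cos (l * Y \<omega>)) = 0"
proof -
  have [measurable]: "U \<in> borel_measurable M" "Y \<in> borel_measurable M"
    and EU: "expectation U = 0" and EY: "expectation Y = 0"
    and gaussian: "\<And>m l. gaussian_rv M (\<lambda>\<omega>. m * U \<omega> + l * Y \<omega>)"
    using assms unfolding centered_gaussian_pair_def by auto
  note U_int = centered_gaussian_pair_integrable(1,2)[OF assms]
    and Y_int = centered_gaussian_pair_integrable(3,4)[OF assms]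
  have UY_int: "integrable M (\<lambda>\<omega>. U \<omega> * Y \<omega>)"
    by (rule integrable_mult_if_square_integrable) (use U_int Y_int in simp_all)
  define a c d where "a = expectation (\<lambda>\<omega>. (U \<omega>)^2)" and "c = expectation (\<lambda>\<omega>. U \<omega> * Y \<omega>)"
    and "d = expectation (\<lambda>\<omega>. (Y \<omega>)^2)"
  define Z where "Z m \<omega> = m * U \<omega> + l * Y \<omega>" for m \<omega>
  have Z_moment: "expectation (\<lambda>\<omega>. (Z m \<omega>)^2) = m^2 * a + 2 * m * l * c + l^2 * d" for m
  proof -
    have "(\<lambda>\<omega>. (Z m \<omega>)^2) = (\<lambda>\<omega>. m^2 * (U \<omega>)^2 + (2 * m * l) * (U \<omega> * Y \<omega>) + l^2 * (Y \<omega>)^2)"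
      by (auto simp: Z_def fun_eq_iff power2_eq_square algebra_simps)
    then show ?thesis using U_int Y_int UY_int by (simp add: a_def c_def d_def)
  qed
  have Z: "Z m \<in> borel_measurable M" "gaussian_rv M (Z m)" "expectation (Z m) = 0" for m
    using gaussian U_int Y_int EU EY by (simp_all add: Z_def[abs_def])
  have "expectation (\<lambda>\<omega>. - sin (l * Y \<omega>) * U \<omega>) = - (l * c) * exp (- (l^2 * d) / 2)"
  proof (rule integral_has_real_derivative_at_0_eq[where f = "\<lambda>m \<omega>. cos (Z m \<omega>)" and g = "\<lambda>\<omega>. \<bar>U \<omega>\<bar>"])
    have "(\<lambda>m. expectation (\<lambda>\<omega>. cos (Z m \<omega>))) = (\<lambda>m. exp (- (m^2 * a + 2 * m * l * c + l^2 * d) / 2))"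
      using centered_gaussian_rv_trig_expectation(1)[OF Z] by (simp add: Z_moment)
    moreover have "((\<lambda>m. exp (- (m^2 * a + 2 * m * l * c + l^2 * d) / 2))
        has_real_derivative - (l * c) * exp (- (l^2 * d) / 2)) (at 0)"
      by (auto intro!: derivative_eq_intros)
    ultimately show "((\<lambda>m. expectation (\<lambda>\<omega>. cos (Z m \<omega>))) has_real_derivative - (l * c) * exp (- (l^2 * d) / 2)) (at 0)"
      by simp
    show "((\<lambda>m. cos (Z m \<omega>)) has_real_derivative - sin (l * Y \<omega>) * U \<omega>) (at 0)" for \<omega>
      unfolding Z_def by (auto intro!: derivative_eq_intros)
    show "\<bar>cos (Z m \<omega>) - cos (Z 0 \<omega>)\<bar> \<le> \<bar>m\<bar> * \<bar>U \<omega>\<bar>" for m \<omega>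
      using abs_cos_diff_le[of "Z m \<omega>" "Z 0 \<omega>"] by (simp add: Z_def abs_mult)
    show "integrable M (\<lambda>\<omega>. cos (Z m \<omega>))" for m
      by (rule integrable_const_bound[where B = 1]) (use Z in auto)
  qed (use U_int Z in auto)
  then show "expectation (\<lambda>\<omega>. U \<omega> * sin (l * Y \<omega>)) =
      l * expectation (\<lambda>\<omega>. U \<omega> * Y \<omega>) * exp (- (l^2 * expectation (\<lambda>\<omega>. (Y \<omega>)^2)) / 2)"
    by (simp add: c_def d_def mult.commute)
  have "expectation (\<lambda>\<omega>. cos (l * Y \<omega>) * U \<omega>) = 0"
  proof (rule integral_has_real_derivative_at_0_eq[where f = "\<lambda>m \<omega>. sin (Z m \<omega>)" and g = "\<lambda>\<omega>. \<bar>U \<omega>\<bar>"])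
    show "((\<lambda>m. expectation (\<lambda>\<omega>. sin (Z m \<omega>))) has_real_derivative 0) (at 0)"
      using centered_gaussian_rv_trig_expectation(2)[OF Z] by simp
    show "((\<lambda>m. sin (Z m \<omega>)) has_real_derivative cos (l * Y \<omega>) * U \<omega>) (at 0)" for \<omega>
      unfolding Z_def by (auto intro!: derivative_eq_intros)
    show "\<bar>sin (Z m \<omega>) - sin (Z 0 \<omega>)\<bar> \<le> \<bar>m\<bar> * \<bar>U \<omega>\<bar>" for m \<omega>
      using abs_sin_diff_le[of "Z m \<omega>" "Z 0 \<omega>"] by (simp add: Z_def abs_mult)
    show "integrable M (\<lambda>\<omega>. sin (Z m \<omega>))" for m
      by (rule integrable_const_bound[where B = 1]) (use Z in auto)
  qed (use U_int Z in auto)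
  then show "expectation (\<lambda>\<omega>. U \<omega> * cos (l * Y \<omega>)) = 0"
    by (simp add: mult.commute)
qed

section \<open>Fourier uniqueness for weighted laws\<close>

definition weighted_law :: "'a measure \<Rightarrow> ('a \<Rightarrow> real) \<Rightarrow> ('a \<Rightarrow> real) \<Rightarrow> real measure" where
  "weighted_law M w Y = distr (density M (\<lambda>\<omega>. ennreal (w \<omega>))) borel Y"

lemma emeasure_weighted_law:
  assumes [measurable]: "w \<in> borel_measurable M" "Y \<in> borel_measurable M" "B \<in> sets borel"
    and "integrable M w" "\<And>\<omega>. 0 \<le> w \<omega>"
  shows "emeasure (weighted_law M w Y) B = ennreal (\<integral>\<omega>. w \<omega> * indicator B (Y \<omega>) \<partial>M)"
proof -
  have "emeasure (weighted_law M w Y) B = (\<integral>\<^sup>+ \<omega>. ennreal (w \<omega>) * indicator (Y -` B \<inter> space M) \<omega> \<partial>M)"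
    by (simp add: weighted_law_def emeasure_distr emeasure_density)
  also have "\<dots> = (\<integral>\<^sup>+ \<omega>. ennreal (w \<omega> * indicator B (Y \<omega>)) \<partial>M)"
    by (intro nn_integral_cong) (auto split: split_indicator)
  also have "\<dots> = ennreal (\<integral>\<omega>. w \<omega> * indicator B (Y \<omega>) \<partial>M)"
    by (rule nn_integral_eq_integral)
       (auto intro!: Bochner_Integration.integrable_bound[OF \<open>integrable M w\<close>]
         simp: assms(5) split: split_indicator)
  finally show ?thesis .
qed

lemma char_weighted_law:
  assumes [measurable]: "w \<in> borel_measurable M" "Y \<in> borel_measurable M"
    and "integrable M w" "\<And>\<omega>. 0 \<le> w \<omega>"
  shows "char (weighted_law M w Y) l =
    Complex (\<integral>\<omega>. w \<omega> * cos (l * Y \<omega>) \<partial>M) (\<integral>\<omega>. w \<omega> * sin (l * Y \<omega>) \<partial>M)"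
proof -
  have "char (weighted_law M w Y) l = (CLINT \<omega>|density M (\<lambda>\<omega>. ennreal (w \<omega>)). iexp (l * Y \<omega>))"
    unfolding char_def weighted_law_def by (rule integral_distr) auto
  also have "\<dots> = (CLINT \<omega>|M. w \<omega> *\<^sub>R iexp (l * Y \<omega>))"
    by (rule integral_density) (auto simp: assms)
  finally have char: "char (weighted_law M w Y) l = (CLINT \<omega>|M. w \<omega> *\<^sub>R iexp (l * Y \<omega>))" .
  have "complex_integrable M (\<lambda>\<omega>. w \<omega> *\<^sub>R iexp (l * Y \<omega>))"
    by (rule Bochner_Integration.integrable_bound[OF \<open>integrable M w\<close>])
       (auto simp: norm_exp_i_times assms(4))
  from integral_Re[OF this] integral_Im[OF this] show ?thesis
    unfolding char by (intro complex_eqI) (simp_all add: Re_exp Im_exp)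
qed

lemma real_distribution_weighted_law:
  assumes [measurable]: "w \<in> borel_measurable M" "Y \<in> borel_measurable M"
    and "integrable M w" "\<And>\<omega>. 0 \<le> w \<omega>" "(\<integral>\<omega>. w \<omega> \<partial>M) = 1"
  shows "real_distribution (weighted_law M w Y)"
proof -
  have "emeasure (weighted_law M w Y) (space (weighted_law M w Y)) = 1"
    using emeasure_weighted_law[of w M Y UNIV] assms by (simp add: weighted_law_def)
  then have "prob_space (weighted_law M w Y)" by (rule prob_spaceI)
  then show ?thesis
    by (simp add: real_distribution_def real_distribution_axioms_def weighted_law_def)
qed

text \<open>After normalising both weights to probability densities this is Levy's uniqueness theorem.\<close>
lemma integral_weighted_indicator_eq_if_trig_eq:
  fixes g h Y :: "'a \<Rightarrow> real"
  assumes [measurable]: "g \<in> borel_measurable M" "h \<in> borel_measurable M" "Y \<in> borel_measurable M"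
    "B \<in> sets borel"
    and integrable: "integrable M g" "integrable M h"
    and nonneg: "\<And>\<omega>. 0 \<le> g \<omega>" "\<And>\<omega>. 0 \<le> h \<omega>"
    and cos: "\<And>l. (\<integral>\<omega>. g \<omega> * cos (l * Y \<omega>) \<partial>M) = (\<integral>\<omega>. h \<omega> * cos (l * Y \<omega>) \<partial>M)"
    and sin: "\<And>l. (\<integral>\<omega>. g \<omega> * sin (l * Y \<omega>) \<partial>M) = (\<integral>\<omega>. h \<omega> * sin (l * Y \<omega>) \<partial>M)"
  shows "(\<integral>\<omega>. g \<omega> * indicator B (Y \<omega>) \<partial>M) = (\<integral>\<omega>. h \<omega> * indicator B (Y \<omega>) \<partial>M)"
proof -
  define m where "m = (\<integral>\<omega>. g \<omega> \<partial>M)"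
  have m_h: "(\<integral>\<omega>. h \<omega> \<partial>M) = m"
    using cos[of 0] by (simp add: m_def)
  have "m \<ge> 0" unfolding m_def using nonneg by simp
  show ?thesis
  proof (cases "m = 0")
    case True
    then have "AE \<omega> in M. g \<omega> = 0" "AE \<omega> in M. h \<omega> = 0"
      using integral_nonneg_eq_0_iff_AE[OF integrable(1)] integral_nonneg_eq_0_iff_AE[OF integrable(2)]
        nonneg m_h by (simp_all add: m_def)
    then have "AE \<omega> in M. g \<omega> * indicator B (Y \<omega>) = h \<omega> * indicator B (Y \<omega>)"
      by eventually_elim simp
    then show ?thesis by (intro integral_cong_AE) auto
  next
    case False
    with \<open>m \<ge> 0\<close> have "m > 0" by simp
    have weights: "integrable M (\<lambda>\<omega>. g \<omega> / m)" "integrable M (\<lambda>\<omega>. h \<omega> / m)"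
      "\<And>\<omega>. 0 \<le> g \<omega> / m" "\<And>\<omega>. 0 \<le> h \<omega> / m"
      using integrable nonneg \<open>m > 0\<close> by auto
    have "weighted_law M (\<lambda>\<omega>. g \<omega> / m) Y = weighted_law M (\<lambda>\<omega>. h \<omega> / m) Y"
    proof (rule Levy_uniqueness)
      show "real_distribution (weighted_law M (\<lambda>\<omega>. g \<omega> / m) Y)"
        "real_distribution (weighted_law M (\<lambda>\<omega>. h \<omega> / m) Y)"
        using weights \<open>m > 0\<close> m_h by (auto intro!: real_distribution_weighted_law simp: m_def)
      show "char (weighted_law M (\<lambda>\<omega>. g \<omega> / m) Y) = char (weighted_law M (\<lambda>\<omega>. h \<omega> / m) Y)"
      proof
        fix l
        show "char (weighted_law M (\<lambda>\<omega>. g \<omega> / m) Y) l = char (weighted_law M (\<lambda>\<omega>. h \<omega> / m) Y) l"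
          using char_weighted_law[of "\<lambda>\<omega>. g \<omega> / m" M Y l] char_weighted_law[of "\<lambda>\<omega>. h \<omega> / m" M Y l]
            weights by (simp add: cos sin)
      qed
    qed
    then have "ennreal ((\<integral>\<omega>. g \<omega> * indicator B (Y \<omega>) \<partial>M) / m) =
        ennreal ((\<integral>\<omega>. h \<omega> * indicator B (Y \<omega>) \<partial>M) / m)"
      using emeasure_weighted_law[of "\<lambda>\<omega>. g \<omega> / m" M Y B] emeasure_weighted_law[of "\<lambda>\<omega>. h \<omega> / m" M Y B]
        weights by simp
    moreover have "0 \<le> (\<integral>\<omega>. g \<omega> * indicator B (Y \<omega>) \<partial>M)" "0 \<le> (\<integral>\<omega>. h \<omega> * indicator B (Y \<omega>) \<partial>M)"
      using nonneg by (auto intro!: Bochner_Integration.integral_nonneg)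
    ultimately show ?thesis
      using \<open>m > 0\<close> by (simp add: divide_right_mono)
  qed
qed

lemma integral_mult_indicator_eq_0_if_trig_eq_0:
  fixes U Y :: "'a \<Rightarrow> real"
  assumes [measurable]: "U \<in> borel_measurable M" "Y \<in> borel_measurable M" "B \<in> sets borel"
    and "integrable M U"
    and cos: "\<And>l. (\<integral>\<omega>. U \<omega> * cos (l * Y \<omega>) \<partial>M) = 0"
    and sin: "\<And>l. (\<integral>\<omega>. U \<omega> * sin (l * Y \<omega>) \<partial>M) = 0"
  shows "(\<integral>\<omega>. U \<omega> * indicator B (Y \<omega>) \<partial>M) = 0"
proof -
  define Upos Uneg where "Upos \<omega> = max (U \<omega>) 0" and "Uneg \<omega> = max (- U \<omega>) 0" for \<omega>
  have parts [measurable]: "Upos \<in> borel_measurable M" "Uneg \<in> borel_measurable M"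
    and parts_integrable: "integrable M Upos" "integrable M Uneg"
    and parts_nonneg: "\<And>\<omega>. 0 \<le> Upos \<omega>" "\<And>\<omega>. 0 \<le> Uneg \<omega>"
    using \<open>integrable M U\<close> by (auto simp: Upos_def[abs_def] Uneg_def[abs_def] intro!: integrable_max)
  have split: "(\<integral>\<omega>. U \<omega> * f (Y \<omega>) \<partial>M) = (\<integral>\<omega>. Upos \<omega> * f (Y \<omega>) \<partial>M) - (\<integral>\<omega>. Uneg \<omega> * f (Y \<omega>) \<partial>M)"
    if [measurable]: "f \<in> borel_measurable borel" and bounded: "\<And>x. \<bar>f x\<bar> \<le> 1" for f
  proof -
    have integrable: "integrable M (\<lambda>\<omega>. V \<omega> * f (Y \<omega>))" if "integrable M V" "V \<in> borel_measurable M" for V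
      by (rule Bochner_Integration.integrable_bound[OF that(1)])
         (use that(2) bounded in \<open>auto simp: abs_mult intro!: mult_left_le\<close>)
    have "U \<omega> = Upos \<omega> - Uneg \<omega>" for \<omega>
      by (simp add: Upos_def Uneg_def max_def)
    then have "(\<integral>\<omega>. U \<omega> * f (Y \<omega>) \<partial>M) = (\<integral>\<omega>. Upos \<omega> * f (Y \<omega>) - Uneg \<omega> * f (Y \<omega>) \<partial>M)"
      by (simp add: left_diff_distrib)
    also have "\<dots> = (\<integral>\<omega>. Upos \<omega> * f (Y \<omega>) \<partial>M) - (\<integral>\<omega>. Uneg \<omega> * f (Y \<omega>) \<partial>M)"
      by (intro Bochner_Integration.integral_diff integrable parts parts_integrable)
    finally show ?thesis .
  qed
  have "(\<integral>\<omega>. Upos \<omega> * indicator B (Y \<omega>) \<partial>M) = (\<integral>\<omega>. Uneg \<omega> * indicator B (Y \<omega>) \<partial>M)"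
  proof (rule integral_weighted_indicator_eq_if_trig_eq)
    show "(\<integral>\<omega>. Upos \<omega> * cos (l * Y \<omega>) \<partial>M) = (\<integral>\<omega>. Uneg \<omega> * cos (l * Y \<omega>) \<partial>M)" for l
      using split[of "\<lambda>x. cos (l * x)"] cos[of l] by simp
    show "(\<integral>\<omega>. Upos \<omega> * sin (l * Y \<omega>) \<partial>M) = (\<integral>\<omega>. Uneg \<omega> * sin (l * Y \<omega>) \<partial>M)" for l
      using split[of "\<lambda>x. sin (l * x)"] sin[of l] by simp
  qed (use parts_integrable parts_nonneg in auto)
  then show ?thesis
    using split[of "indicator B"] by simp
qed

section \<open>Conditioning on a random variable and the Markov property\<close>

lemma subalgebra_vimage_algebra:
  assumes "Y \<in> measurable M N"
  shows "subalgebra M (vimage_algebra (space M) Y N)"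
proof -
  have "sets (vimage_algebra (space M) Y N) = {Y -` A \<inter> space M | A. A \<in> sets N}"
    using measurable_space[OF assms] by (intro sets_vimage_algebra2) auto
  then show ?thesis
    using assms by (auto simp: subalgebra_def measurable_sets)
qed

lemma (in prob_space) real_cond_exp_vimage_algebra_eq_0:
  fixes U Y :: "'a \<Rightarrow> real"
  assumes [measurable]: "U \<in> borel_measurable M" "Y \<in> borel_measurable M" and "integrable M U"
    and orthogonal: "\<And>B. B \<in> sets borel \<Longrightarrow> expectation (\<lambda>\<omega>. U \<omega> * indicator B (Y \<omega>)) = 0"
  shows "AE \<omega> in M. real_cond_exp M (vimage_algebra (space M) Y borel) U \<omega> = 0"
proof -
  interpret finite_measure_subalgebra M "vimage_algebra (space M) Y borel"
    by unfold_locales (simp add: subalgebra_vimage_algebra)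
  show ?thesis
  proof (rule real_cond_exp_charact)
    fix A assume "A \<in> sets (vimage_algebra (space M) Y borel)"
    then obtain B where B: "B \<in> sets borel" "A = Y -` B \<inter> space M"
      by (auto simp: sets_vimage_algebra2)
    have "(\<integral>\<omega>\<in>A. U \<omega> \<partial>M) = expectation (\<lambda>\<omega>. U \<omega> * indicator B (Y \<omega>))"
      unfolding set_lebesgue_integral_def B(2)
      by (intro Bochner_Integration.integral_cong) (auto split: split_indicator)
    then show "(\<integral>\<omega>\<in>A. U \<omega> \<partial>M) = (\<integral>\<omega>\<in>A. 0 \<partial>M)"
      using orthogonal[OF B(1)] by (simp add: set_lebesgue_integral_def)
  qed (use \<open>integrable M U\<close> in auto)
qed

lemma (in prob_space) integral_mult_eq_0_if_real_cond_exp_eq_0: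
  assumes G: "subalgebra M G" and V: "V \<in> borel_measurable G" and [measurable]: "U \<in> borel_measurable M"
    and "integrable M U" and bounded: "AE \<omega> in M. \<bar>V \<omega>\<bar> \<le> C"
    and U_cond: "AE \<omega> in M. real_cond_exp M G U \<omega> = 0"
  shows "expectation (\<lambda>\<omega>. V \<omega> * U \<omega>) = 0"
proof -
  interpret finite_measure_subalgebra M G
    by unfold_locales (rule G)
  have [measurable]: "V \<in> borel_measurable M"
    by (rule measurable_from_subalg[OF G V])
  have "integrable M (\<lambda>\<omega>. V \<omega> * U \<omega>)"
  proof (rule Bochner_Integration.integrable_bound[where f = "\<lambda>\<omega>. C * U \<omega>"])
    show "AE \<omega> in M. norm (V \<omega> * U \<omega>) \<le> norm (C * U \<omega>)"
      using bounded by eventually_elim (auto simp: abs_mult intro!: mult_right_mono)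
  qed (use \<open>integrable M U\<close> in auto)
  then have "expectation (\<lambda>\<omega>. V \<omega> * U \<omega>) = expectation (\<lambda>\<omega>. V \<omega> * real_cond_exp M G U \<omega>)"
    using real_cond_exp_intg(2)[OF _ V] by simp
  also have "\<dots> = 0"
    using U_cond by (auto intro!: integral_eq_zero_AE elim!: AE_mp)
  finally show ?thesis .
qed

lemma (in prob_space) integral_mult_fun_eq_0_if_indicator_orthogonal:
  fixes U Y :: "'a \<Rightarrow> real"
  assumes [measurable]: "U \<in> borel_measurable M" "Y \<in> borel_measurable M" and "integrable M U"
    and orthogonal: "\<And>B. B \<in> sets borel \<Longrightarrow> expectation (\<lambda>\<omega>. U \<omega> * indicator B (Y \<omega>)) = 0"
    and [measurable]: "f \<in> borel_measurable borel" and bounded: "\<And>x. \<bar>f x\<bar> \<le> C"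
  shows "expectation (\<lambda>\<omega>. U \<omega> * f (Y \<omega>)) = 0"
proof -
  have "(\<lambda>\<omega>. f (Y \<omega>)) \<in> borel_measurable (vimage_algebra (space M) Y borel)"
    using measurable_vimage_algebra1[of Y "space M" borel] by measurable
  then have "expectation (\<lambda>\<omega>. f (Y \<omega>) * U \<omega>) = 0"
    using real_cond_exp_vimage_algebra_eq_0[OF assms(1-4)] \<open>integrable M U\<close> bounded
    by (intro integral_mult_eq_0_if_real_cond_exp_eq_0[OF subalgebra_vimage_algebra[OF assms(2)]]) auto
  then show ?thesis by (simp add: mult.commute)
qed

lemma gen_sigma_at_eq_vimage_algebra: "gen_sigma_at M X s = vimage_algebra (space M) (X s) borel"
  by (simp add: gen_sigma_at_def vimage_algebra_def)

lemma
  assumes "\<And>u. 0 \<le> u \<Longrightarrow> u \<le> s \<Longrightarrow> X u \<in> borel_measurable M"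
  shows subalgebra_nat_filtration: "subalgebra M (nat_filtration M X s)"
    and measurable_nat_filtration: "0 \<le> u \<Longrightarrow> u \<le> s \<Longrightarrow> X u \<in> borel_measurable (nat_filtration M X s)"
proof -
  define G where "G = {X u -` A \<inter> space M | u A. 0 \<le> u \<and> u \<le> s \<and> A \<in> sets (borel :: real measure)}"
  have G: "G \<subseteq> Pow (space M)" by (auto simp: G_def)
  have space: "space (nat_filtration M X s) = space M"
    and sets: "sets (nat_filtration M X s) = sigma_sets (space M) G"
    using space_measure_of[OF G] sets_measure_of[OF G] by (simp_all add: nat_filtration_def G_def)
  have "sigma_sets (space M) G \<subseteq> sets M"
    by (rule sets.sigma_sets_subset) (use assms in \<open>auto simp: G_def intro: measurable_sets\<close>)
  then show "subalgebra M (nat_filtration M X s)"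
    by (simp add: subalgebra_def space sets)
  show "X u \<in> borel_measurable (nat_filtration M X s)" if "0 \<le> u" "u \<le> s"
  proof (rule measurableI)
    show "X u -` A \<inter> space (nat_filtration M X s) \<in> sets (nat_filtration M X s)"
      if "A \<in> sets borel" for A
      using \<open>0 \<le> u\<close> \<open>u \<le> s\<close> that by (auto simp: space sets G_def intro!: sigma_sets.Basic)
  qed simp
qed

text \<open>
  Conditioning on the past replaces \<open>P(X\<^sub>t \<in> A | past)\<close> by the function
  \<open>P(X\<^sub>t \<in> A | X\<^sub>s)\<close> of the present, against which \<open>U\<close> integrates to zero.
\<close>
lemma (in prob_space) markov_process_orthogonal_future:
  assumes markov: "markov_process M X"
    and X: "\<And>u. 0 \<le> u \<Longrightarrow> X u \<in> borel_measurable M"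
    and "0 \<le> s" "s \<le> t" "A \<in> sets borel"
    and U: "U \<in> borel_measurable (nat_filtration M X s)" "integrable M U"
    and U_cond: "AE \<omega> in M. real_cond_exp M (gen_sigma_at M X s) U \<omega> = 0"
  shows "expectation (\<lambda>\<omega>. U \<omega> * indicator A (X t \<omega>)) = 0"
proof -
  define F G where "F = nat_filtration M X s" and "G = gen_sigma_at M X s"
  interpret F: finite_measure_subalgebra M F
    by unfold_locales (use X in \<open>simp add: F_def subalgebra_nat_filtration\<close>)
  interpret G: finite_measure_subalgebra M G
    by unfold_locales
       (use X[OF \<open>0 \<le> s\<close>] in \<open>simp add: G_def gen_sigma_at_eq_vimage_algebra subalgebra_vimage_algebra\<close>)
  have [measurable]: "U \<in> borel_measurable M" "X t \<in> borel_measurable M"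
    using measurable_from_subalg[OF F.subalg] U(1) X \<open>0 \<le> s\<close> \<open>s \<le> t\<close> by (auto simp: F_def)
  define I where "I = (indicator (X t -` A \<inter> space M) :: 'a \<Rightarrow> real)"
  have [measurable]: "I \<in> borel_measurable M"
    unfolding I_def using \<open>A \<in> sets borel\<close> by measurable
  have I_bounds: "0 \<le> I \<omega>" "I \<omega> \<le> 1" for \<omega>
    by (auto simp: I_def split: split_indicator)
  then have "integrable M I"
    by (intro integrable_const_bound[where B = 1]) auto
  have G_bounds: "AE \<omega> in M. \<bar>real_cond_exp M G I \<omega>\<bar> \<le> 1"
    using G.real_cond_exp_ge_c[OF \<open>integrable M I\<close>, of 0] G.real_cond_exp_le_c[OF \<open>integrable M I\<close>, of 1]
      I_bounds by auto
  have "integrable M (\<lambda>\<omega>. U \<omega> * I \<omega>)"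
    by (rule Bochner_Integration.integrable_bound[OF U(2)])
       (auto simp: abs_mult I_bounds intro!: mult_left_le)
  then have "expectation (\<lambda>\<omega>. U \<omega> * I \<omega>) = expectation (\<lambda>\<omega>. U \<omega> * real_cond_exp M F I \<omega>)"
    using F.real_cond_exp_intg(2)[of U I] U(1) by (simp add: F_def)
  also have "\<dots> = expectation (\<lambda>\<omega>. real_cond_exp M G I \<omega> * U \<omega>)"
  proof (rule integral_cong_AE)
    have "AE \<omega> in M. real_cond_exp M F I \<omega> = real_cond_exp M G I \<omega>"
      using markov \<open>0 \<le> s\<close> \<open>s \<le> t\<close> \<open>A \<in> sets borel\<close>
      unfolding markov_process_def F_def G_def I_def by blast
    then show "AE \<omega> in M. U \<omega> * real_cond_exp M F I \<omega> = real_cond_exp M G I \<omega> * U \<omega>"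
      by eventually_elim simp
  qed auto
  also have "\<dots> = 0"
    using G_bounds U_cond U(2) unfolding G_def
    by (intro integral_mult_eq_0_if_real_cond_exp_eq_0[OF G.subalg[unfolded G_def]]) auto
  finally have "expectation (\<lambda>\<omega>. U \<omega> * I \<omega>) = 0" .
  moreover have "expectation (\<lambda>\<omega>. U \<omega> * I \<omega>) = expectation (\<lambda>\<omega>. U \<omega> * indicator A (X t \<omega>))"
    by (intro Bochner_Integration.integral_cong) (auto simp: I_def split: split_indicator)
  ultimately show ?thesis by simp
qed

section \<open>Covariance of a Gaussian Markov process\<close>

lemma (in prob_space) centered_gaussian_pair_uncorrelated_iff:
  assumes pair: "centered_gaussian_pair M U Y"
  shows "expectation (\<lambda>\<omega>. U \<omega> * Y \<omega>) = 0 \<longleftrightarrow>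
    (\<forall>B \<in> sets borel. expectation (\<lambda>\<omega>. U \<omega> * indicator B (Y \<omega>)) = 0)"
proof -
  have [measurable]: "U \<in> borel_measurable M" "Y \<in> borel_measurable M"
    using pair by (simp_all add: centered_gaussian_pair_def)
  note U_int = centered_gaussian_pair_integrable(1)[OF pair]
  note trig = centered_gaussian_pair_trig_moments[OF pair]
  show ?thesis
  proof
    assume "expectation (\<lambda>\<omega>. U \<omega> * Y \<omega>) = 0"
    then have "expectation (\<lambda>\<omega>. U \<omega> * cos (l * Y \<omega>)) = 0" "expectation (\<lambda>\<omega>. U \<omega> * sin (l * Y \<omega>)) = 0"
      for l using trig[of l] by simp_all
    then show "\<forall>B \<in> sets borel. expectation (\<lambda>\<omega>. U \<omega> * indicator B (Y \<omega>)) = 0"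
      using integral_mult_indicator_eq_0_if_trig_eq_0[of U M Y] U_int by simp
  next
    assume "\<forall>B \<in> sets borel. expectation (\<lambda>\<omega>. U \<omega> * indicator B (Y \<omega>)) = 0"
    then have "expectation (\<lambda>\<omega>. U \<omega> * sin (Y \<omega>)) = 0"
      using integral_mult_fun_eq_0_if_indicator_orthogonal[of U Y sin 1] U_int by simp
    then show "expectation (\<lambda>\<omega>. U \<omega> * Y \<omega>) = 0"
      using trig(1)[of 1] by simp
  qed
qed

lemma gaussian_process_gaussian_rv_sum:
  assumes "gaussian_process M X" "finite T" "T \<subseteq> {0..}"
  shows "gaussian_rv M (\<lambda>\<omega>. \<Sum>t\<in>T. c t * X t \<omega>)"
  using assms unfolding gaussian_process_def gaussian_rv_def by simp

lemma gaussian_process_gaussian_rv: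
  assumes "gaussian_process M X" "0 \<le> u"
  shows "gaussian_rv M (X u)"
  using gaussian_process_gaussian_rv_sum[OF assms(1), of "{u}" "\<lambda>_. 1"] assms(2) by simp

lemma gaussian_process_gaussian_rv_lincomb3:
  assumes "gaussian_process M X" "0 \<le> r" "0 \<le> s" "0 \<le> t" "r \<noteq> s" "r \<noteq> t" "s \<noteq> t"
  shows "gaussian_rv M (\<lambda>\<omega>. \<alpha> * X r \<omega> + \<beta> * X s \<omega> + \<gamma> * X t \<omega>)"
proof -
  define c where "c u = (if u = r then \<alpha> else if u = s then \<beta> else \<gamma>)" for u
  have "(\<lambda>\<omega>. \<Sum>u\<in>{r, s, t}. c u * X u \<omega>) = (\<lambda>\<omega>. \<alpha> * X r \<omega> + \<beta> * X s \<omega> + \<gamma> * X t \<omega>)"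
    using assms(5-7) by (simp add: c_def fun_eq_iff)
  then show ?thesis
    using gaussian_process_gaussian_rv_sum[OF assms(1), of "{r, s, t}" c] assms(2-4) by simp
qed

lemma (in prob_space) gaussian_process_centered_pair:
  assumes gaussian: "gaussian_process M X" and centered: "\<And>u. 0 \<le> u \<Longrightarrow> expectation (X u) = 0"
    and "0 \<le> r" "r < s" "s < t" "w \<in> {s, t}"
  shows "centered_gaussian_pair M (\<lambda>\<omega>. X r \<omega> - b * X s \<omega>) (X w)"
proof -
  have X [measurable]: "X u \<in> borel_measurable M" if "0 \<le> u" for u
    using gaussian that by (simp add: gaussian_process_def)
  have X_int: "integrable M (X u)" if "0 \<le> u" for u
    using gaussian_rv_integrable(1)[OF X[OF that] gaussian_process_gaussian_rv[OF gaussian that]] .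
  have "gaussian_rv M (\<lambda>\<omega>. m * (X r \<omega> - b * X s \<omega>) + l * X w \<omega>)" for m l
  proof (cases "w = s")
    case True
    have "(\<lambda>\<omega>. m * (X r \<omega> - b * X s \<omega>) + l * X w \<omega>) = (\<lambda>\<omega>. m * X r \<omega> + (l - m * b) * X s \<omega> + 0 * X t \<omega>)"
      by (simp add: True fun_eq_iff algebra_simps)
    then show ?thesis
      by (simp only:) (rule gaussian_process_gaussian_rv_lincomb3[OF gaussian]; use assms(3-5) in simp)
  next
    case False
    with \<open>w \<in> {s, t}\<close> have "(\<lambda>\<omega>. m * (X r \<omega> - b * X s \<omega>) + l * X w \<omega>) = (\<lambda>\<omega>. m * X r \<omega> + (- m * b) * X s \<omega> + l * X t \<omega>)"
      by (auto simp: fun_eq_iff algebra_simps)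
    then show ?thesis
      by (simp only:) (rule gaussian_process_gaussian_rv_lincomb3[OF gaussian]; use assms(3-5) in simp)
  qed
  then show ?thesis
    using assms X_int by (auto simp: centered_gaussian_pair_def)
qed

text \<open>
  With \<open>b = R(r,s) / R(s,s)\<close> the variable \<open>U = X\<^sub>r - b X\<^sub>s\<close> of the past is uncorrelated
  with, hence (being jointly Gaussian with it) conditionally centered given, the present \<open>X\<^sub>s\<close>.
  The Markov property carries this orthogonality over to the future \<open>X\<^sub>t\<close>, and joint
  Gaussianity turns it back into \<open>R(r,t) = b R(s,t)\<close>.
\<close>
theorem (in prob_space) gaussian_markov_covariance_factorization:
  assumes markov: "markov_process M X" and gaussian: "gaussian_process M X"
    and centered: "\<And>u. 0 \<le> u \<Longrightarrow> expectation (X u) = 0"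
    and "0 \<le> r" "r < s" "s < t"
    and nondegenerate: "expectation (\<lambda>\<omega>. X s \<omega> * X s \<omega>) \<noteq> 0"
  shows "expectation (\<lambda>\<omega>. X r \<omega> * X t \<omega>) * expectation (\<lambda>\<omega>. X s \<omega> * X s \<omega>) =
    expectation (\<lambda>\<omega>. X r \<omega> * X s \<omega>) * expectation (\<lambda>\<omega>. X s \<omega> * X t \<omega>)"
proof -
  define R where "R u v = expectation (\<lambda>\<omega>. X u \<omega> * X v \<omega>)" for u v
  define b where "b = R r s / R s s"
  define U where "U \<omega> = X r \<omega> - b * X s \<omega>" for \<omega>
  have X [measurable]: "X u \<in> borel_measurable M" if "0 \<le> u" for u
    using gaussian that by (simp add: gaussian_process_def)
  have X_sq: "integrable M (\<lambda>\<omega>. (X u \<omega>)^2)" if "0 \<le> u" for u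
    using gaussian_rv_integrable(2)[OF X[OF that] gaussian_process_gaussian_rv[OF gaussian that]] .
  have pair: "centered_gaussian_pair M U (X w)" if "w \<in> {s, t}" for w
    unfolding U_def using gaussian_process_centered_pair[OF gaussian centered] assms(4-6) that by simp
  have U_int: "integrable M U"
    using centered_gaussian_pair_integrable(1)[OF pair[of s]] by simp
  have U_X: "expectation (\<lambda>\<omega>. U \<omega> * X w \<omega>) = R r w - b * R s w" if "w \<in> {s, t}" for w
  proof -
    have "0 \<le> w" using that assms(4-6) by auto
    then have "integrable M (\<lambda>\<omega>. X u \<omega> * X w \<omega>)" if "0 \<le> u" for u
      using that by (intro integrable_mult_if_square_integrable X X_sq)
    then show ?thesis
      using assms(4,5) by (simp add: U_def R_def left_diff_distrib mult.assoc)
  qed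
  have "expectation (\<lambda>\<omega>. U \<omega> * X s \<omega>) = 0"
    using U_X[of s] nondegenerate by (simp add: b_def R_def)
  then have "\<forall>B \<in> sets borel. expectation (\<lambda>\<omega>. U \<omega> * indicator B (X s \<omega>)) = 0"
    using centered_gaussian_pair_uncorrelated_iff[OF pair] by simp
  then have "AE \<omega> in M. real_cond_exp M (gen_sigma_at M X s) U \<omega> = 0"
    using U_int assms(4,5) unfolding gen_sigma_at_eq_vimage_algebra
    by (intro real_cond_exp_vimage_algebra_eq_0) (auto simp: U_def)
  moreover have "U \<in> borel_measurable (nat_filtration M X s)"
    unfolding U_def[abs_def] using X assms(4,5)
    by (intro borel_measurable_diff borel_measurable_times borel_measurable_const measurable_nat_filtration) auto
  ultimately have "\<forall>A \<in> sets borel. expectation (\<lambda>\<omega>. U \<omega> * indicator A (X t \<omega>)) = 0"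
    using U_int assms(4-6) by (intro ballI markov_process_orthogonal_future[OF markov X]) auto
  then have "expectation (\<lambda>\<omega>. U \<omega> * X t \<omega>) = 0"
    using centered_gaussian_pair_uncorrelated_iff[OF pair] by simp
  then show ?thesis
    using U_X[of t] nondegenerate by (simp add: b_def R_def field_simps)
qed

section \<open>The sub-fractional covariance\<close>

definition sfbm_cov :: "real \<Rightarrow> real \<Rightarrow> real \<Rightarrow> real" where
  "sfbm_cov H s t = s powr (2*H) + t powr (2*H) - (1/2) * ((s + t) powr (2*H) + \<bar>s - t\<bar> powr (2*H))"

lemma powr_second_difference_mvt:
  fixes p v :: real
  assumes "v > 1"
  obtains z where "z > v - 1" "(v+1) powr p - 2 * v powr p + (v-1) powr p = p * (p-1) * z powr (p-2)"
proof -
  define h where "h x = (x+1) powr p - x powr p" for x :: real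
  define h' where "h' x = p * ((x+1) powr (p-1) - x powr (p-1))" for x :: real
  have "(h has_real_derivative h' x) (at x)" if "v - 1 \<le> x" for x
    unfolding h_def h'_def using that assms by (auto intro!: derivative_eq_intros simp: algebra_simps)
  then obtain \<xi> where \<xi>: "\<xi> > v - 1" "h v - h (v-1) = h' \<xi>"
    using MVT2[of "v-1" v h h'] by auto
  have "((\<lambda>x. x powr (p-1)) has_real_derivative (p-1) * x powr (p-2)) (at x)" if "\<xi> \<le> x" for x
    using has_real_derivative_powr[of x "p-1"] that \<xi>(1) assms by (simp add: diff_diff_eq)
  then obtain z where z: "z > \<xi>" "(\<xi>+1) powr (p-1) - \<xi> powr (p-1) = (p-1) * z powr (p-2)"
    using MVT2[of \<xi> "\<xi>+1" "\<lambda>x. x powr (p-1)" "\<lambda>x. (p-1) * x powr (p-2)"] by auto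
  have "(v+1) powr p - 2 * v powr p + (v-1) powr p = h v - h (v-1)"
    unfolding h_def by simp
  also have "\<dots> = p * (p-1) * z powr (p-2)"
    using \<xi>(2) z(2) by (simp add: h'_def)
  finally show ?thesis
    using that[of z] \<xi>(1) z(1) by simp
qed

lemma tendsto_powr_midpoint_defect:
  fixes p :: real
  assumes "0 < p" "p < 2"
  shows "((\<lambda>v. v powr p - ((v+1) powr p + (v-1) powr p) / 2) \<longlongrightarrow> 0) at_top"
proof (rule Lim_null_comparison)
  have "((\<lambda>v::real. (v - 1) powr (p-2)) \<longlongrightarrow> 0) at_top"
    using assms by real_asymp
  then show "((\<lambda>v. p * \<bar>p-1\<bar> / 2 * (v - 1) powr (p-2)) \<longlongrightarrow> 0) at_top"
    by (rule tendsto_mult_right_zero)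
  show "\<forall>\<^sub>F v in at_top.
    norm (v powr p - ((v+1) powr p + (v-1) powr p) / 2) \<le> p * \<bar>p-1\<bar> / 2 * (v - 1) powr (p-2)"
  proof (rule eventually_mono[OF eventually_gt_at_top[of 2]])
    fix v :: real
    assume v: "v > 2"
    then obtain z where z: "z > v - 1"
      and eq: "(v+1) powr p - 2 * v powr p + (v-1) powr p = p * (p-1) * z powr (p-2)"
      using powr_second_difference_mvt[of v p] by auto
    have "norm (v powr p - ((v+1) powr p + (v-1) powr p) / 2)
        = \<bar>(v+1) powr p - 2 * v powr p + (v-1) powr p\<bar> / 2"
      by (simp add: abs_minus_commute[of "v powr p"] field_simps)
    also have "\<dots> = p * \<bar>p-1\<bar> / 2 * z powr (p-2)"
      using assms by (simp add: eq abs_mult)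
    also have "\<dots> \<le> p * \<bar>p-1\<bar> / 2 * (v - 1) powr (p-2)"
      using assms z v by (intro mult_left_mono powr_mono2') auto
    finally show "norm (v powr p - ((v+1) powr p + (v-1) powr p) / 2) \<le> p * \<bar>p-1\<bar> / 2 * (v - 1) powr (p-2)" .
  qed
qed

lemma sfbm_cov_scale:
  assumes "a \<ge> 0" "s \<ge> 0" "t \<ge> 0"
  shows "sfbm_cov H (a * s) (a * t) = a powr (2*H) * sfbm_cov H s t"
proof -
  have sum: "(a * s + a * t) powr (2*H) = a powr (2*H) * (s + t) powr (2*H)"
    using assms by (simp add: distrib_left[symmetric] powr_mult)
  have diff: "\<bar>a * s - a * t\<bar> powr (2*H) = a powr (2*H) * \<bar>s - t\<bar> powr (2*H)"
    using assms by (simp add: right_diff_distrib[symmetric] abs_mult powr_mult)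
  show ?thesis
    unfolding sfbm_cov_def sum diff using assms by (simp add: powr_mult algebra_simps)
qed

lemma sfbm_cov_1_1: "sfbm_cov H 1 1 = 2 - 2 powr (2*H) / 2"
  by (simp add: sfbm_cov_def)

lemma sfbm_cov_diag_pos:
  assumes "0 < H" "H < 1" "v > 0"
  shows "sfbm_cov H v v > 0"
proof -
  have "2 powr (2*H) < 2 powr 2"
    using assms by (intro powr_less_mono) auto
  then show ?thesis
    using assms sfbm_cov_scale[of v 1 1 H] by (simp add: sfbm_cov_1_1)
qed

lemma tendsto_sfbm_cov_1:
  assumes "0 < H" "H < 1"
  shows "((\<lambda>v. sfbm_cov H 1 v) \<longlongrightarrow> 1) at_top"
proof -
  have "((\<lambda>v. 1 + (v powr (2*H) - ((v+1) powr (2*H) + (v-1) powr (2*H)) / 2)) \<longlongrightarrow> 1 + 0) at_top"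
    using tendsto_powr_midpoint_defect[of "2*H"] assms by (intro tendsto_intros) auto
  moreover have "\<forall>\<^sub>F v in at_top.
      1 + (v powr (2*H) - ((v+1) powr (2*H) + (v-1) powr (2*H)) / 2) = sfbm_cov H 1 v"
    by (intro eventually_mono[OF eventually_gt_at_top[of 1]]) (simp add: sfbm_cov_def add.commute)
  ultimately show ?thesis
    by (simp add: tendsto_cong)
qed

lemma sfbm_cov_factorization_imp_half:
  fixes H :: real
  assumes H: "0 < H" "H < 1"
    and factorization: "\<And>v. v > 1 \<Longrightarrow>
      sfbm_cov H 1 (v^2) * sfbm_cov H v v = sfbm_cov H 1 v * sfbm_cov H v (v^2)"
  shows "H = 1/2"
proof -
  have eq: "sfbm_cov H 1 1 * sfbm_cov H 1 (v^2) = (sfbm_cov H 1 v)^2" if "v > 1" for v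
  proof -
    have "sfbm_cov H v v = v powr (2*H) * sfbm_cov H 1 1"
      "sfbm_cov H v (v^2) = v powr (2*H) * sfbm_cov H 1 v"
      using sfbm_cov_scale[of v 1 1 H] sfbm_cov_scale[of v 1 v H] that by (simp_all add: power2_eq_square)
    then show ?thesis
      using factorization[OF that] that by (simp add: power2_eq_square mult_ac)
  qed
  have "filterlim (\<lambda>v::real. v^2) at_top at_top" by real_asymp
  then have "((\<lambda>v. sfbm_cov H 1 1 * sfbm_cov H 1 (v^2)) \<longlongrightarrow> sfbm_cov H 1 1 * 1) at_top"
    by (intro tendsto_intros filterlim_compose[OF tendsto_sfbm_cov_1[OF H]])
  moreover have "((\<lambda>v. (sfbm_cov H 1 v)^2) \<longlongrightarrow> 1^2) at_top"
    by (intro tendsto_intros tendsto_sfbm_cov_1[OF H])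
  then have "((\<lambda>v. sfbm_cov H 1 1 * sfbm_cov H 1 (v^2)) \<longlongrightarrow> 1^2) at_top"
    by (rule Lim_transform_eventually) (auto intro: eventually_mono[OF eventually_gt_at_top[of 1]] simp: eq)
  ultimately have "sfbm_cov H 1 1 * 1 = 1^2"
    by (rule tendsto_unique[OF trivial_limit_at_top_linorder])
  then have "2 powr (2*H) = 2 powr 1"
    by (simp add: sfbm_cov_1_1)
  then have "2*H = 1" by (simp only: powr_inj)
  then show ?thesis by simp
qed

theorem mainTheorem5:
  fixes M :: "'a measure" and X :: "real \<Rightarrow> 'a \<Rightarrow> real" and H :: real
  assumes "prob_space M"
    and "0 < H" and "H < 1" and "H \<noteq> 1/2"
    and "gaussian_process M X"
    and "\<And>t. 0 \<le> t \<Longrightarrow> prob_space.expectation M (X t) = 0"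
    and "\<And>s t. 0 \<le> s \<Longrightarrow> 0 \<le> t \<Longrightarrow>
           prob_space.expectation M (\<lambda>\<omega>. X s \<omega> * X t \<omega>) =
             s powr (2*H) + t powr (2*H) - (1/2) * ((s + t) powr (2*H) + \<bar>s - t\<bar> powr (2*H))"
  shows "\<not> markov_process M X"
proof
  assume markov: "markov_process M X"
  interpret prob_space M by (rule assms(1))
  have cov: "expectation (\<lambda>\<omega>. X s \<omega> * X t \<omega>) = sfbm_cov H s t" if "0 \<le> s" "0 \<le> t" for s t
    using assms(7)[OF that] by (simp add: sfbm_cov_def)
  have "sfbm_cov H 1 (v^2) * sfbm_cov H v v = sfbm_cov H 1 v * sfbm_cov H v (v^2)" if "v > 1" for v
  proof -
    have "v < v^2" "sfbm_cov H v v \<noteq> 0"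
      using that sfbm_cov_diag_pos[OF assms(2,3), of v] by (auto simp: power2_eq_square)
    then show ?thesis
      using gaussian_markov_covariance_factorization[OF markov assms(5,6), of 1 v "v^2"] that
      by (simp add: cov)
  qed
  then have "H = 1/2"
    by (rule sfbm_cov_factorization_imp_half[OF assms(2,3)])
  with assms(4) show False ..
qed

end
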